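(* Let $n\in\mathbb N$ and let $\xi_n:S^1\to M_n(\mathbb C)$ be given by $\xi_n(z)_{ij}=z^{j-i}$ ($1\le i,j\le n$). Then $\xi_n$ is pure in the convex cone $\left(C(S^1)^{(n)}\otimes_{\min}C(S^1)_{(n)}\right)_+$: whenever $\xi_n=y+w$ with $y,w$ in this cone, there is $\lambda\in[0,1]$ with $w=\lambda\xi_n$ and $y=(1-\lambda)\xi_n$.
   Context: $C(S^1)^{(n)}\subseteq M_n(\mathbb C)$ is the space of Toeplitz matrices $[\tau_{k-\ell}]$. $C(S^1)_{(n)}$ is the space of continuous functions $f$ on the unit circle $S^1$ with Fourier coefficients $\hat f(k)=0$ for $|k|\ge n$. $C(S^1)^{(n)}\otimes_{\min}C(S^1)_{(n)}$ is identified with the space of continuous functions $F:S^1\to C(S^1)^{(n)}$ whose entries lie in $C(S^1)_{(n)}$ (with $t\otimes f\leftrightarrow z\mapsto f(z)t$), and its positive cone consists of those $F$ with $F(z)$ positive semidefinite for all $z\in S^1$. Note $\xi_n=\sum_{k=-n+1}^{n-1} r_k\otimes z^{-k}$, where $r_k=s^k$ for $k\ge0$, $r_k=(s^* )^{-k}$ for $k<0$, $s$ the lower-triangular shift matrix. *)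

theory Defs
  imports "HOL-Analysis.Analysis"
begin

definition S1 :: "complex set" where
  "S1 = sphere 0 1"

definition fourier_coeff :: "(complex \<Rightarrow> complex) \<Rightarrow> int \<Rightarrow> complex" where
  "fourier_coeff f k =
     integral {0..2*pi} (\<lambda>t. f (cis t) * cis (- (of_int k * t))) / complex_of_real (2*pi)"

definition trig_n :: "nat \<Rightarrow> (complex \<Rightarrow> complex) \<Rightarrow> bool" where
  "trig_n n f \<longleftrightarrow> continuous_on S1 f \<and>
     (\<forall>k::int. \<bar>k\<bar> \<ge> int n \<longrightarrow> fourier_coeff f k = 0)"

text \<open>n x n matrices are represented as functions nat => nat => complex, indices 0..n-1.\<close>
definition toeplitz_mat :: "nat \<Rightarrow> (nat \<Rightarrow> nat \<Rightarrow> complex) \<Rightarrow> bool" where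
  "toeplitz_mat n A \<longleftrightarrow> (\<forall>i j i' j'. i < n \<longrightarrow> j < n \<longrightarrow> i' < n \<longrightarrow> j' < n \<longrightarrow>
      int j - int i = int j' - int i' \<longrightarrow> A i j = A i' j')"

definition psd_mat :: "nat \<Rightarrow> (nat \<Rightarrow> nat \<Rightarrow> complex) \<Rightarrow> bool" where
  "psd_mat n A \<longleftrightarrow> (\<forall>v :: nat \<Rightarrow> complex.
      let q = (\<Sum>i<n. \<Sum>j<n. cnj (v i) * A i j * v j) in Im q = 0 \<and> Re q \<ge> 0)"

text \<open>Positive cone of C(S^1)^(n) \<otimes>_min C(S^1)_(n), viewed as functions S^1 -> Toeplitz matrices
  with entries in C(S^1)_(n), positive semidefinite at every point.\<close>
definition pos_cone :: "nat \<Rightarrow> (complex \<Rightarrow> nat \<Rightarrow> nat \<Rightarrow> complex) \<Rightarrow> bool" where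
  "pos_cone n F \<longleftrightarrow>
     (\<forall>i<n. \<forall>j<n. trig_n n (\<lambda>z. F z i j)) \<and>
     (\<forall>z\<in>S1. toeplitz_mat n (F z)) \<and>
     (\<forall>z\<in>S1. psd_mat n (F z))"

definition xi :: "complex \<Rightarrow> nat \<Rightarrow> nat \<Rightarrow> complex" where
  "xi z i j = z powi (int j - int i)"

end

theory Submission
  imports Defs
begin

text \<open>At every point z of the circle, w(z) and y(z) are positive semidefinite and add up to the
  rank one matrix xi(z), whose entries have modulus one. In a 2x2 principal submatrix positivity
  bounds the off-diagonal entries by the diagonal ones; as w(z) is Toeplitz its diagonal is a
  constant c(z), so the triangle inequality for xi(z)_ij = w(z)_ij + y(z)_ij becomes an equality,
  which forces w(z) = c(z) xi(z). The corner entries c(z) z^(n-1) and c(z) z^(1-n) of w have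
  no Fourier coefficients of modulus at least n, so all nonzero Fourier coefficients of c vanish
  and c is constant by uniqueness of Fourier coefficients, which follows from the
  Stone-Weierstrass theorem.\<close>

section \<open>Positive semidefinite matrices\<close>

definition psd_2x2 :: "complex \<Rightarrow> complex \<Rightarrow> complex \<Rightarrow> complex \<Rightarrow> bool" where
  "psd_2x2 a b c d \<longleftrightarrow> (\<forall>x y.
      let q = cnj x * a * x + cnj x * b * y + cnj y * c * x + cnj y * d * y in Im q = 0 \<and> Re q \<ge> 0)"

lemma quadratic_form_restrict_support:
  fixes v :: "nat \<Rightarrow> complex"
  assumes "S \<subseteq> {..<n}" and "\<And>i. i \<notin> S \<Longrightarrow> v i = 0"
  shows "(\<Sum>i<n. \<Sum>j<n. cnj (v i) * A i j * v j) = (\<Sum>i\<in>S. \<Sum>j\<in>S. cnj (v i) * A i j * v j)"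
proof -
  have fin: "finite S" using assms(1) finite_subset by blast
  have "(\<Sum>j<n. cnj (v i) * A i j * v j) = (\<Sum>j\<in>S. cnj (v i) * A i j * v j)" for i
    by (rule sum.mono_neutral_right) (use assms fin in auto)
  then have "(\<Sum>i<n. \<Sum>j<n. cnj (v i) * A i j * v j) = (\<Sum>i<n. \<Sum>j\<in>S. cnj (v i) * A i j * v j)"
    by simp
  also have "\<dots> = (\<Sum>i\<in>S. \<Sum>j\<in>S. cnj (v i) * A i j * v j)"
    by (rule sum.mono_neutral_right) (use assms fin in auto)
  finally show ?thesis .
qed

lemma psd_matD:
  assumes "psd_mat n A"
  shows "Im (\<Sum>i<n. \<Sum>j<n. cnj (v i) * A i j * v j) = 0"
    and "Re (\<Sum>i<n. \<Sum>j<n. cnj (v i) * A i j * v j) \<ge> 0"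
  using assms unfolding psd_mat_def Let_def by simp_all

lemma psd_mat_diag:
  assumes "psd_mat n A" and "p < n"
  shows "Im (A p p) = 0 \<and> Re (A p p) \<ge> 0"
proof -
  define v where "v = (\<lambda>i. if i = p then (1::complex) else 0)"
  have "(\<Sum>i<n. \<Sum>j<n. cnj (v i) * A i j * v j) = A p p"
    using quadratic_form_restrict_support[of "{p}" n v A] assms(2) by (simp add: v_def)
  with psd_matD[OF assms(1), of v] show ?thesis by simp
qed

lemma psd_mat_principal_2x2:
  assumes "psd_mat n A" and "p < n" "q < n" "p \<noteq> q"
  shows "psd_2x2 (A p p) (A p q) (A q p) (A q q)"
  unfolding psd_2x2_def
proof (intro allI)
  fix x y :: complex
  define v where "v i = (if i = p then x else if i = q then y else 0)" for i
  have "(\<Sum>i<n. \<Sum>j<n. cnj (v i) * A i j * v j)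
      = cnj x * A p p * x + cnj x * A p q * y + cnj y * A q p * x + cnj y * A q q * y"
    using quadratic_form_restrict_support[of "{p, q}" n v A] assms(2-4) by (simp add: v_def)
  with psd_matD[OF assms(1), of v]
  show "let q = cnj x * A p p * x + cnj x * A p q * y + cnj y * A q p * x + cnj y * A q q * y
        in Im q = 0 \<and> Re q \<ge> 0"
    by simp
qed

lemma psd_2x2_hermitian:
  assumes "psd_2x2 a b c d"
  shows "Im a = 0" and "Im d = 0" and "c = cnj b"
proof -
  have q: "Im (cnj x * a * x + cnj x * b * y + cnj y * c * x + cnj y * d * y) = 0" for x y
    using assms unfolding psd_2x2_def Let_def by blast
  show "Im a = 0" using q[of 1 0] by simp
  show "Im d = 0" using q[of 0 1] by simp
  have "Im b + Im c = 0" "Re b - Re c = 0"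
    using q[of 1 1] q[of 1 \<i>] \<open>Im a = 0\<close> \<open>Im d = 0\<close> by simp_all
  then show "c = cnj b" by (simp add: complex_eq_iff)
qed

lemma psd_2x2_norm_off_diag_le:
  assumes "psd_2x2 a b c a"
  shows "cmod b \<le> Re a"
proof -
  have q: "Re (cnj x * a * x + cnj x * b * y + cnj y * c * x + cnj y * a * y) \<ge> 0" for x y
    using assms unfolding psd_2x2_def Let_def by blast
  have c: "c = cnj b" using psd_2x2_hermitian[OF assms] by simp
  show ?thesis
  proof (cases "b = 0")
    case True
    then show ?thesis using q[of 1 0] by simp
  next
    case False
    define y where "y = - cnj b / cmod b"
    have nb: "b * cnj b = of_real (cmod b) * of_real (cmod b)"
      by (metis complex_norm_square power2_eq_square of_real_mult)
    have "b * y = - cmod b" "cnj y * cnj b = - cmod b" "cnj y * y = 1"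
      using False by (simp_all add: y_def nb mult.commute[of "cnj b"] divide_simps)
    then have "Re (cnj 1 * a * 1 + cnj 1 * b * y + cnj y * c * 1 + cnj y * a * y) = 2 * Re a - 2 * cmod b"
      by (simp add: c algebra_simps)
    then show ?thesis using q[of 1 y] by simp
  qed
qed

lemma psd_2x2_summand_of_rank_one:
  assumes A: "psd_2x2 c a b c" and B: "psd_2x2 (1 - c) (u - a) (cnj u - b) (1 - c)"
    and u: "cmod u = 1"
  shows "a = c * u"
proof -
  have c: "c = of_real (Re c)" using psd_2x2_hermitian(1)[OF A] by (simp add: complex_eq_iff)
  have le_a: "cmod a \<le> Re c" and le_ua: "cmod (u - a) \<le> 1 - Re c"
    using psd_2x2_norm_off_diag_le[OF A] psd_2x2_norm_off_diag_le[OF B] by simp_all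
  have "cmod u \<le> cmod a + cmod (u - a)" by (rule norm_triangle_sub)
  with u le_a le_ua have "cmod a = Re c" "cmod (u - a) = 1 - Re c" by linarith+
  moreover have "cmod (a + (u - a)) = cmod a + cmod (u - a)"
    using calculation u by simp
  ultimately have "Re c *\<^sub>R (u - a) = (1 - Re c) *\<^sub>R a"
    using norm_triangle_eq[of a "u - a"] by simp
  then have "a = Re c *\<^sub>R u"
    by (simp add: scaleR_diff_right scaleR_diff_left eq_diff_eq)
  then show ?thesis by (simp add: scaleR_conv_of_real flip: c)
qed

lemma xi_diag [simp]: "xi z i i = 1"
  by (simp add: xi_def)

lemma
  assumes "cmod z = 1"
  shows cnj_xi: "cnj (xi z i j) = xi z j i" and norm_xi: "cmod (xi z i j) = 1"
proof -
  have "z * cnj z = 1" using complex_norm_square[of z] assms by simp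
  then have cnj_z: "cnj z = inverse z" by (rule inverse_unique[symmetric])
  have "cnj (xi z i j) = inverse (xi z i j)"
    unfolding xi_def complex_cnj_power_int cnj_z power_int_inverse ..
  also have "\<dots> = xi z j i"
    unfolding xi_def power_int_minus[symmetric] by simp
  finally show "cnj (xi z i j) = xi z j i" .
  show "cmod (xi z i j) = 1"
    using assms by (simp add: xi_def norm_power_int)
qed

lemma toeplitz_psd_summand_of_xi:
  assumes A: "psd_mat n A" "toeplitz_mat n A" and B: "psd_mat n B" and z: "cmod z = 1"
    and sum: "\<forall>i<n. \<forall>j<n. xi z i j = B i j + A i j"
    and ij: "i < n" "j < n"
  shows "A i j = A 0 0 * xi z i j"
proof -
  have diag: "A k k = A 0 0" if "k < n" for k
    using A(2)[unfolded toeplitz_mat_def, rule_format, of k k 0 0] that by simp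
  show ?thesis
  proof (cases "i = j")
    case True
    then show ?thesis using diag[OF ij(1)] by simp
  next
    case False
    have B_eq: "B k l = xi z k l - A k l" if "k < n" "l < n" for k l
      using sum that by (metis add_diff_cancel)
    show ?thesis
    proof (rule psd_2x2_summand_of_rank_one)
      show "psd_2x2 (A 0 0) (A i j) (A j i) (A 0 0)"
        using psd_mat_principal_2x2[OF A(1) ij False] by (simp only: diag ij)
      show "psd_2x2 (1 - A 0 0) (xi z i j - A i j) (cnj (xi z i j) - A j i) (1 - A 0 0)"
        using psd_mat_principal_2x2[OF B ij False]
        by (simp add: B_eq ij cnj_xi[OF z] diag[OF ij(1)] diag[OF ij(2)])
      show "cmod (xi z i j) = 1" by (rule norm_xi[OF z])
    qed
  qed
qed

section \<open>Fourier coefficients on the circle\<close>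

lemma cis_in_S1 [simp]: "cis t \<in> S1"
  by (simp add: S1_def)

lemma S1_eq_cis:
  assumes "z \<in> S1"
  shows "\<exists>t\<in>{0..2*pi}. z = cis t"
proof
  show "z = cis (Arg2pi z)"
    using assms complex_norm_eq_1_exp[of z] by (simp add: S1_def cis_conv_exp)
  show "Arg2pi z \<in> {0..2*pi}"
    using Arg2pi_ge_0[of z] Arg2pi_lt_2pi[of z] by simp
qed

lemma continuous_on_S1_compose_cis:
  "continuous_on S1 f \<Longrightarrow> continuous_on A (\<lambda>t. f (cis t))"
  by (rule continuous_on_compose2[of S1 f]) (auto intro!: continuous_intros)

lemma fourier_coeff_cong:
  "(\<And>z. z \<in> S1 \<Longrightarrow> f z = g z) \<Longrightarrow> fourier_coeff f k = fourier_coeff g k"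
  by (simp add: fourier_coeff_def)

lemma trig_n_cong:
  "(\<And>z. z \<in> S1 \<Longrightarrow> f z = g z) \<Longrightarrow> trig_n n f \<longleftrightarrow> trig_n n g"
  unfolding trig_n_def by (metis continuous_on_cong fourier_coeff_cong)

lemma fourier_coeff_mult_powi:
  "fourier_coeff (\<lambda>z. f z * z powi k) m = fourier_coeff f (m - k)"
proof -
  have "cis t powi k * cis (- (of_int m * t)) = cis (- (of_int (m - k) * t))" for t
    by (simp add: cis_power_int cis_mult algebra_simps)
  then show ?thesis by (simp add: fourier_coeff_def mult.assoc)
qed

lemma has_vector_derivative_cis_multiple:
  "((\<lambda>t. cis (a * t)) has_vector_derivative (\<i> * a * cis (a * t))) (at t within S)"
proof -
  have "((\<lambda>t. cis (a * t)) has_derivative (\<lambda>h. (a * h) *\<^sub>R (\<i> * cis (a * t)))) (at t within S)"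
    by (intro derivative_eq_intros) auto
  then show ?thesis
    by (simp add: has_vector_derivative_def scaleR_conv_of_real algebra_simps)
qed

lemma integral_cis_multiple:
  "integral {0..2*pi} (\<lambda>t. cis (of_int k * t)) = (if k = 0 then 2 * pi else 0)"
proof (cases "k = 0")
  case False
  have "((\<lambda>t. cis (of_int k * t) / (\<i> * of_int k)) has_vector_derivative cis (of_int k * t))
          (at t within {0..2*pi})" for t
    using has_vector_derivative_divide[OF has_vector_derivative_cis_multiple[of "of_int k" t "{0..2*pi}"],
        of "\<i> * of_int k"]
      False by simp
  then have "((\<lambda>t. cis (of_int k * t)) has_integral
               cis (of_int k * (2*pi)) / (\<i> * of_int k) - cis (of_int k * 0) / (\<i> * of_int k)) {0..2*pi}"
    by (intro fundamental_theorem_of_calculus) auto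
  moreover have "cis (of_int k * (2*pi)) = 1"
    using cis_multiple_2pi[of "of_int k"] by (simp add: mult.commute mult.left_commute)
  ultimately show ?thesis using False by (simp add: integral_unique)
qed (simp add: scaleR_conv_of_real)

lemma fourier_coeff_diff_const:
  assumes "continuous_on S1 f"
  shows "fourier_coeff (\<lambda>z. f z - a) k = fourier_coeff f k - (if k = 0 then a else 0)"
proof -
  have "integral {0..2*pi} (\<lambda>t. (f (cis t) - a) * cis (- (of_int k * t)))
      = integral {0..2*pi} (\<lambda>t. f (cis t) * cis (- (of_int k * t)))
        - a * integral {0..2*pi} (\<lambda>t. cis (of_int (- k) * t))"
    by (simp add: left_diff_distrib integral_diff integrable_continuous_interval continuous_intros
        continuous_on_S1_compose_cis[OF assms])
  moreover have "integral {0..2*pi} (\<lambda>t. cis (of_int (- k) * t)) = (if k = 0 then 2 * pi else 0)"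
    using integral_cis_multiple[of "- k"] by simp
  ultimately show ?thesis
    by (simp add: fourier_coeff_def diff_divide_distrib)
qed

section \<open>Trigonometric polynomials and uniqueness of Fourier coefficients\<close>

inductive trig_poly :: "(real \<Rightarrow> complex) \<Rightarrow> bool" where
  monomial: "trig_poly (\<lambda>t. a * cis (of_int k * t))"
| add: "trig_poly p \<Longrightarrow> trig_poly q \<Longrightarrow> trig_poly (\<lambda>t. p t + q t)"

lemma trig_poly_const: "trig_poly (\<lambda>t. a)"
  using trig_poly.monomial[of a 0] by simp

lemma trig_poly_mult:
  assumes "trig_poly p" and "trig_poly q"
  shows "trig_poly (\<lambda>t. p t * q t)"
  using assms
proof (induction arbitrary: q)
  case (monomial a k)
  from monomial.prems show ?case
  proof induction
    case (monomial b l)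
    have "(\<lambda>t. a * cis (of_int k * t) * (b * cis (of_int l * t))) = (\<lambda>t. (a * b) * cis (of_int (k + l) * t))"
      by (simp add: cis_mult algebra_simps)
    then show ?case by (simp only:) (rule trig_poly.monomial)
  next
    case (add p q)
    then show ?case using trig_poly.add[OF add.IH] by (simp add: distrib_left)
  qed
next
  case (add p1 p2)
  then show ?case using trig_poly.add[OF add.IH(1)[OF add.prems] add.IH(2)[OF add.prems]]
    by (simp add: distrib_right)
qed

lemma continuous_on_trig_poly: "trig_poly p \<Longrightarrow> continuous_on A p"
  by (induction rule: trig_poly.induct) (auto intro!: continuous_intros)

lemma trig_poly_real_polynomial_function:
  assumes "real_polynomial_function g"
  shows "trig_poly (\<lambda>t. of_real (g (cis t)))"
  using assms
proof induction
  case (linear g)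
  have g: "g (cis t) = cos t * g 1 + sin t * g \<i>" for t
  proof -
    have "cis t = cos t *\<^sub>R 1 + sin t *\<^sub>R \<i>" by (simp add: complex_eq_iff)
    then show ?thesis
      using linear by (simp add: linear_add linear_scale bounded_linear.linear)
  qed
  define a where "a = (of_real (g 1) - \<i> * of_real (g \<i>)) / 2"
  define b where "b = (of_real (g 1) + \<i> * of_real (g \<i>)) / 2"
  have "(\<lambda>t. of_real (g (cis t))) = (\<lambda>t. a * cis (of_int 1 * t) + b * cis (of_int (- 1) * t))"
    by (rule ext) (simp add: g a_def b_def complex_eq_iff field_simps)
  then show ?case by (simp only: trig_poly.add trig_poly.monomial)
next
  case (const c)
  then show ?case by (rule trig_poly_const)
next
  case (add f g)
  then show ?case using trig_poly.add[OF add.IH] by simp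
next
  case (mult f g)
  then show ?case using trig_poly_mult[OF mult.IH] by simp
qed

lemma trig_poly_polynomial_function:
  fixes g :: "complex \<Rightarrow> complex"
  assumes "polynomial_function g"
  shows "trig_poly (\<lambda>t. g (cis t))"
proof -
  have "real_polynomial_function (\<lambda>z. Re (g z))" "real_polynomial_function (\<lambda>z. Im (g z))"
    using assms bounded_linear_Re bounded_linear_Im unfolding polynomial_function_def o_def by blast+
  then have "trig_poly (\<lambda>t. of_real (Re (g (cis t))) + \<i> * of_real (Im (g (cis t))))"
    by (intro trig_poly.add trig_poly_mult trig_poly_const trig_poly_real_polynomial_function)
  then show ?thesis by (simp only: complex_eq[symmetric])
qed

lemma integral_mult_trig_poly_eq_0:
  assumes f: "continuous_on S1 f" and coeff: "\<And>k. fourier_coeff f k = 0"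
    and p: "trig_poly p"
  shows "integral {0..2*pi} (\<lambda>t. f (cis t) * p t) = 0"
  using p
proof induction
  case (monomial a k)
  have "integral {0..2*pi} (\<lambda>t. f (cis t) * cis (- (of_int (- k) * t))) = 0"
    using coeff[of "- k"] by (simp add: fourier_coeff_def)
  then show ?case
    by (simp add: mult.left_commute[of _ a])
next
  case (add p q)
  have "(\<lambda>t. f (cis t) * p t) integrable_on {0..2*pi}" "(\<lambda>t. f (cis t) * q t) integrable_on {0..2*pi}"
    by (intro integrable_continuous_interval continuous_intros continuous_on_S1_compose_cis[OF f]
        continuous_on_trig_poly[OF add.hyps(1)] continuous_on_trig_poly[OF add.hyps(2)])+
  then show ?case using add.IH by (simp add: distrib_left integral_add)
qed

lemma compact_S1: "compact S1"
  by (simp add: S1_def)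

text \<open>Approximate cnj f uniformly by a polynomial g: on the circle g is a trigonometric polynomial,
  hence orthogonal to f, so the integral of f cnj f = f (cnj f - g) is at most e times that of |f|.\<close>
lemma integral_norm_square_eq_0_if_fourier_coeff_eq_0:
  assumes f: "continuous_on S1 f" and coeff: "\<And>k. fourier_coeff f k = 0"
  shows "integral {0..2*pi} (\<lambda>t. (cmod (f (cis t)))\<^sup>2) = 0"
proof -
  define J where "J = integral {0..2*pi} (\<lambda>t. (cmod (f (cis t)))\<^sup>2)"
  define K where "K = integral {0..2*pi} (\<lambda>t. cmod (f (cis t)))"
  have cont: "continuous_on A (\<lambda>t. f (cis t))" for A
    by (rule continuous_on_S1_compose_cis[OF f])
  have J_ge: "J \<ge> 0"
    unfolding J_def by (intro integral_nonneg integrable_continuous_interval continuous_intros cont) simp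
  have K_ge: "K \<ge> 0"
    unfolding K_def by (intro integral_nonneg integrable_continuous_interval continuous_intros cont) simp
  have J_le: "J \<le> e * K" if e: "e > 0" for e
  proof -
    have "continuous_on S1 (\<lambda>z. cnj (f z))" using f by (intro continuous_intros)
    then obtain g where g: "polynomial_function g" "\<forall>z\<in>S1. cmod (cnj (f z) - g z) < e"
      using Stone_Weierstrass_polynomial_function[OF compact_S1 _ e] by blast
    have cont_g: "continuous_on A (\<lambda>t. g (cis t))" for A
      by (rule continuous_on_trig_poly[OF trig_poly_polynomial_function[OF g(1)]])
    have "((\<lambda>t. of_real ((cmod (f (cis t)))\<^sup>2)) has_integral (of_real J :: complex)) {0..2*pi}"
      unfolding J_def
      by (rule has_integral_of_real[OF integrable_integral])
        (intro integrable_continuous_interval continuous_intros cont)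
    then have "((\<lambda>t. f (cis t) * cnj (f (cis t))) has_integral (of_real J :: complex)) {0..2*pi}"
      by (simp only: complex_norm_square)
    then have "of_real J = integral {0..2*pi} (\<lambda>t. f (cis t) * cnj (f (cis t)))"
      by (rule integral_unique[symmetric])
    also have "\<dots> = integral {0..2*pi} (\<lambda>t. f (cis t) * (cnj (f (cis t)) - g (cis t)))"
      using integral_mult_trig_poly_eq_0[OF f coeff trig_poly_polynomial_function[OF g(1)]]
      by (simp add: right_diff_distrib integral_diff integrable_continuous_interval
          continuous_intros cont cont_g)
    finally have "J = cmod (integral {0..2*pi} (\<lambda>t. f (cis t) * (cnj (f (cis t)) - g (cis t))))"
      using J_ge by (metis norm_of_real abs_of_nonneg)
    also have "\<dots> \<le> integral {0..2*pi} (\<lambda>t. cmod (f (cis t)) * e)"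
    proof (rule integral_norm_bound_integral)
      show "(\<lambda>t. f (cis t) * (cnj (f (cis t)) - g (cis t))) integrable_on {0..2*pi}"
        "(\<lambda>t. cmod (f (cis t)) * e) integrable_on {0..2*pi}"
        by (intro integrable_continuous_interval continuous_intros cont cont_g)+
      show "cmod (f (cis t) * (cnj (f (cis t)) - g (cis t))) \<le> cmod (f (cis t)) * e" for t
        unfolding norm_mult using g(2) by (intro mult_left_mono) (auto simp: less_imp_le)
    qed
    also have "\<dots> = e * K" by (simp add: K_def)
    finally show ?thesis .
  qed
  have "J \<le> 0"
  proof (rule field_le_epsilon)
    fix e :: real
    assume "e > 0"
    then have "J \<le> e / (K + 1) * K" using K_ge by (intro J_le) simp
    also have "\<dots> \<le> e" using \<open>e > 0\<close> K_ge by (simp add: field_simps)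
    finally show "J \<le> 0 + e" by simp
  qed
  with J_ge show ?thesis by (simp add: J_def)
qed

lemma fourier_coeff_eq_0_imp_eq_0:
  assumes f: "continuous_on S1 f" and coeff: "\<And>k. fourier_coeff f k = 0" and z: "z \<in> S1"
  shows "f z = 0"
proof -
  obtain t where t: "t \<in> {0..2*pi}" "z = cis t" using S1_eq_cis[OF z] by blast
  have cont: "continuous_on A (\<lambda>t. (cmod (f (cis t)))\<^sup>2)" for A
    by (intro continuous_intros continuous_on_S1_compose_cis[OF f])
  have "((\<lambda>t. (cmod (f (cis t)))\<^sup>2) has_integral 0) (cbox 0 (2*pi))"
    using integrable_integral[OF integrable_continuous_interval[OF cont], of 0 "2*pi"]
      integral_norm_square_eq_0_if_fourier_coeff_eq_0[OF f coeff]
    by simp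
  from has_integral_0_cbox_imp_0[OF cont _ this] have "(cmod (f (cis t)))\<^sup>2 = 0"
    using t pi_gt_zero by auto
  then show ?thesis using t by simp
qed

lemma fourier_coeff_eq_0_imp_constant:
  assumes f: "continuous_on S1 f" and coeff: "\<And>k. k \<noteq> 0 \<Longrightarrow> fourier_coeff f k = 0"
    and z: "z \<in> S1"
  shows "f z = fourier_coeff f 0"
proof -
  have "f z - fourier_coeff f 0 = 0"
  proof (rule fourier_coeff_eq_0_imp_eq_0[where f = "\<lambda>z. f z - fourier_coeff f 0"])
    show "continuous_on S1 (\<lambda>z. f z - fourier_coeff f 0)" using f by (intro continuous_intros)
    show "fourier_coeff (\<lambda>z. f z - fourier_coeff f 0) k = 0" for k
      using coeff[of k] by (simp add: fourier_coeff_diff_const[OF f])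
  qed (rule z)
  then show ?thesis by simp
qed

lemma fourier_coeff_eq_0_if_trig_n_times_xi:
  assumes "trig_n (Suc N) (\<lambda>z. c z * xi z N 0)" and "trig_n (Suc N) (\<lambda>z. c z * xi z 0 N)"
    and "m \<noteq> 0"
  shows "fourier_coeff c m = 0"
proof (cases "m < 0")
  case True
  have "fourier_coeff c m = fourier_coeff (\<lambda>z. c z * z powi (- int N)) (m - int N)"
    by (simp add: fourier_coeff_mult_powi)
  also have "\<dots> = 0"
    using assms(1) True unfolding trig_n_def xi_def by simp
  finally show ?thesis .
next
  case False
  have "fourier_coeff c m = fourier_coeff (\<lambda>z. c z * z powi int N) (m + int N)"
    unfolding fourier_coeff_mult_powi by simp
  also have "\<dots> = 0"
    using assms(2,3) False unfolding trig_n_def xi_def by simp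
  finally show ?thesis .
qed

lemma pos_cone_summand_of_xi:
  assumes "pos_cone n y" "pos_cone n w" "\<forall>z\<in>S1. \<forall>i<n. \<forall>j<n. xi z i j = y z i j + w z i j"
    and "z \<in> S1" "i < n" "j < n"
  shows "w z i j = w z 0 0 * xi z i j"
  using toeplitz_psd_summand_of_xi[of n "w z" "y z" z i j] assms
  unfolding pos_cone_def by (simp add: S1_def)

lemma pos_cone_summand_of_xi_diag_bounds:
  assumes "pos_cone n y" "pos_cone n w" "\<forall>z\<in>S1. \<forall>i<n. \<forall>j<n. xi z i j = y z i j + w z i j"
    and "z \<in> S1" "0 < n"
  shows "Im (w z 0 0) = 0" "0 \<le> Re (w z 0 0)" "Re (w z 0 0) \<le> 1"
proof -
  have "y z 0 0 = 1 - w z 0 0"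
    using assms(3-5) by (metis add_diff_cancel xi_diag)
  then show "Im (w z 0 0) = 0" "0 \<le> Re (w z 0 0)" "Re (w z 0 0) \<le> 1"
    using assms(1,2,4,5) psd_mat_diag[of n "w z" 0] psd_mat_diag[of n "y z" 0]
    unfolding pos_cone_def by auto
qed

lemma pos_cone_summand_of_xi_diag_constant:
  assumes "pos_cone (Suc N) y" "pos_cone (Suc N) w"
    and "\<forall>z\<in>S1. \<forall>i<Suc N. \<forall>j<Suc N. xi z i j = y z i j + w z i j" and "z \<in> S1"
  shows "w z 0 0 = w 1 0 0"
proof -
  define c where "c z = w z 0 0" for z
  have "trig_n (Suc N) (\<lambda>z. c z * xi z i j)" if "i < Suc N" "j < Suc N" for i j
    using assms(2) that trig_n_cong[of "\<lambda>z. w z i j" "\<lambda>z. c z * xi z i j"]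
      pos_cone_summand_of_xi[OF assms(1-3) _ that]
    unfolding pos_cone_def c_def by auto
  then have coeff: "fourier_coeff c m = 0" if "m \<noteq> 0" for m
    using fourier_coeff_eq_0_if_trig_n_times_xi[of N c m] that by simp
  have "continuous_on S1 c"
    using assms(2) unfolding pos_cone_def trig_n_def c_def by auto
  then show ?thesis
    using fourier_coeff_eq_0_imp_constant[OF _ coeff] assms(4)
    by (simp add: c_def S1_def)
qed

theorem proposition7p9:
  fixes n :: nat and y w :: "complex \<Rightarrow> nat \<Rightarrow> nat \<Rightarrow> complex"
  assumes "pos_cone n y" and "pos_cone n w"
    and "\<forall>z\<in>S1. \<forall>i<n. \<forall>j<n. xi z i j = y z i j + w z i j"
  shows "\<exists>c::real. 0 \<le> c \<and> c \<le> 1 \<and>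
    (\<forall>z\<in>S1. \<forall>i<n. \<forall>j<n. w z i j = complex_of_real c * xi z i j \<and>
                          y z i j = complex_of_real (1 - c) * xi z i j)"
proof (cases n)
  case 0
  then show ?thesis by (intro exI[of _ 0]) simp
next
  case (Suc N)
  have one: "1 \<in> S1" by (simp add: S1_def)
  note bounds = pos_cone_summand_of_xi_diag_bounds[OF assms one, unfolded Suc, simplified]
  have w_diag: "w z 0 0 = of_real (Re (w 1 0 0))" if "z \<in> S1" for z
    using pos_cone_summand_of_xi_diag_constant[OF assms[unfolded Suc] that] bounds(1)
    by (simp add: complex_eq_iff)
  show ?thesis
  proof (intro exI[of _ "Re (w 1 0 0)"] conjI ballI allI impI)
    show "0 \<le> Re (w 1 0 0)" "Re (w 1 0 0) \<le> 1" using bounds(2,3) by simp_all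
    fix z i j
    assume "z \<in> S1" "i < n" "j < n"
    then show "w z i j = of_real (Re (w 1 0 0)) * xi z i j"
      and "y z i j = of_real (1 - Re (w 1 0 0)) * xi z i j"
      using pos_cone_summand_of_xi[OF assms] w_diag assms(3) by (auto simp: algebra_simps)
  qed
qed

end
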